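(* Let $\Omega\subset\mathbb{R}^n$ be a domain and let $\mathcal{S}$ be a valid subdivision for $\Omega$. Let $z_0,z\in\bigcup_{S\in\mathcal{S}}S$ and let $\{S_i:0\le i\le j\}\subset\mathcal{S}$ be a sequence with $z_0\in S_0$, $z\in S_j$, and $\partial S_i\cap\partial S_{i+1}\neq\emptyset$ for $0\le i<j$. Then \[ k(z,z_0;\Omega)\le 2\sum_{i=0}^{j}\frac{d(S_i)}{\delta(S_i)}. \]
   Context: A collection $\mathcal{S}$ of sets is a valid subdivision of a domain $\Omega$ if: each $S\in\mathcal{S}$ is a closed subset of $\Omega$; each $S\in\mathcal{S}$ is star-shaped (with respect to some point of $S$); for distinct $S,T\in\mathcal{S}$, $|S\cap T|=0$ (Lebesgue measure); $|\Omega\setminus\bigcup_{S\in\mathcal{S}}S|=0$; and for every pair $z_0,z\in\bigcup_{S\in\mathcal{S}}S$ there is a finite sequence $S_0,\dots,S_j\in\mathcal{S}$ with $z_0\in S_0$, $z\in S_j$ and $\partial S_i\cap\partial S_{i+1}\ne\emptyset$. For $S\in\mathcal{S}$, $d(S)$ is the diameter of $S$ and $\delta(S)$ is the distance from $S$ to $\partial\Omega$. The quasihyperbolic distance is $k(z,z_0;\Omega)=\inf_\gamma\int_\gamma\frac{d\sigma}{d(\zeta,\partial\Omega)}$ over rectifiable curves $\gamma\subset\Omega$ joining $z$ to $z_0$. *)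

theory Defs
  imports "HOL-Analysis.Analysis"
begin

definition partitions_of :: "real \<Rightarrow> real \<Rightarrow> (nat \<times> (nat \<Rightarrow> real)) set" where
  "partitions_of a b = {(m, t). 0 < m \<and> t 0 = a \<and> t m = b \<and> (\<forall>i<m. t i \<le> t (Suc i))}"

definition curve_length_on :: "(real \<Rightarrow> 'a::euclidean_space) \<Rightarrow> real \<Rightarrow> real \<Rightarrow> ereal" where
  "curve_length_on g a b =
     (SUP p \<in> partitions_of a b. ereal (\<Sum>i<fst p. dist (g (snd p i)) (g (snd p (Suc i)))))"

definition rectifiable_curve :: "(real \<Rightarrow> 'a::euclidean_space) \<Rightarrow> bool" where
  "rectifiable_curve g \<longleftrightarrow> path g \<and> curve_length_on g 0 1 < \<infinity>"

text \<open>Arc-length integral of a nonnegative function f along g over [0,1], defined as the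
  supremum of lower Darboux--Stieltjes sums with respect to arc length.\<close>
definition arclength_integral :: "('a::euclidean_space \<Rightarrow> real) \<Rightarrow> (real \<Rightarrow> 'a) \<Rightarrow> ereal" where
  "arclength_integral f g =
     (SUP p \<in> partitions_of 0 1.
        (\<Sum>i<fst p. ereal (Inf ((f \<circ> g) ` {snd p i .. snd p (Suc i)}))
                     * curve_length_on g (snd p i) (snd p (Suc i))))"

definition qh_dist :: "'a::euclidean_space set \<Rightarrow> 'a \<Rightarrow> 'a \<Rightarrow> ereal" where
  "qh_dist \<Omega> z z0 =
     (INF g \<in> {g. rectifiable_curve g \<and> path_image g \<subseteq> \<Omega> \<and> pathstart g = z \<and> pathfinish g = z0}.
        arclength_integral (\<lambda>\<zeta>. 1 / infdist \<zeta> (frontier \<Omega>)) g)"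

definition valid_subdivision :: "'a::euclidean_space set \<Rightarrow> 'a set set \<Rightarrow> bool" where
  "valid_subdivision \<Omega> \<S> \<longleftrightarrow>
     (\<forall>S\<in>\<S>. S \<subseteq> \<Omega> \<and> closedin (top_of_set \<Omega>) S) \<and>
     (\<forall>S\<in>\<S>. starlike S) \<and>
     (\<forall>S\<in>\<S>. \<forall>T\<in>\<S>. S \<noteq> T \<longrightarrow> S \<inter> T \<in> null_sets lebesgue) \<and>
     \<Omega> - \<Union>\<S> \<in> null_sets lebesgue \<and>
     (\<forall>z0\<in>\<Union>\<S>. \<forall>z\<in>\<Union>\<S>. \<exists>(j::nat) Sq. (\<forall>i\<le>j. Sq i \<in> \<S>) \<and> z0 \<in> Sq 0 \<and> z \<in> Sq j \<and>
          (\<forall>i<j. frontier (Sq i) \<inter> frontier (Sq (Suc i)) \<noteq> {}))"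

text \<open>The quotient d(S)/\<delta>(S) as an extended real: +\<infinity> if S is unbounded or touches
  the boundary (\<delta>(S) = 0); 0 if \<partial>\<Omega> is empty (then \<delta>(S) = \<infinity>).\<close>
definition diam_dist_ratio :: "'a::euclidean_space set \<Rightarrow> 'a set \<Rightarrow> ereal" where
  "diam_dist_ratio \<Omega> S =
     (if frontier \<Omega> = {} then 0
      else if bounded S \<and> setdist S (frontier \<Omega>) > 0
           then ereal (diameter S / setdist S (frontier \<Omega>))
      else \<infinity>)"

end

theory Submission
  imports Defs
begin

text \<open>Join z to z0 by a polygon that, inside each S_i, runs from the point where it enters S_i
  to a star centre of S_i and on to a common point of S_i and S_(i+1). Each of the 2(j+1) segments
  lies in a single S_i, so it is no longer than d(S_i), and on it the density 1/dist(., \<partial>\<Omega>) is at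
  most 1/\<delta>(S_i). Parametrised proportionally to arc length, the polygon is Lipschitz with constant
  its total length L, and the arc-length integral along an L-Lipschitz curve is at most L times
  the ordinary integral of the density over [0,1]; this gives the bound. Degenerate segments are
  avoided by padding every segment length by \<epsilon> and letting \<epsilon> tend to 0.\<close>

section \<open>Arc-length integrals along Lipschitz curves\<close>

lemma lift_Suc_mono_le_upto:
  fixes \<tau> :: "nat \<Rightarrow> 'a::order"
  assumes "\<forall>k<N. \<tau> k \<le> \<tau> (Suc k)" "k \<le> l" "l \<le> N"
  shows "\<tau> k \<le> \<tau> l"
  by (rule lift_Suc_mono_le_ivl[of "{..<N}"]) (use assms in auto)

lemma partition_subinterval:
  assumes "(m, t) \<in> partitions_of a b" "i < m"
  shows "a \<le> t i" "t i \<le> t (Suc i)" "t (Suc i) \<le> b"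
proof -
  have t: "t 0 = a" "t m = b" "\<forall>k<m. t k \<le> t (Suc k)"
    using assms(1) by (auto simp: partitions_of_def)
  show "a \<le> t i" "t i \<le> t (Suc i)" "t (Suc i) \<le> b"
    using lift_Suc_mono_le_upto[OF t(3), of 0 i] lift_Suc_mono_le_upto[OF t(3), of "Suc i" m] assms(2) t
    by auto
qed

lemma curve_length_on_le_lipschitz:
  assumes "K-lipschitz_on {a..b} g"
  shows "curve_length_on g a b \<le> ereal (K * (b - a))"
  unfolding curve_length_on_def
proof (rule SUP_least)
  fix p assume p: "p \<in> partitions_of a b"
  then obtain m t where mt: "p = (m, t)" "t 0 = a" "t m = b"
    by (auto simp: partitions_of_def)
  have "(\<Sum>i<m. dist (g (t i)) (g (t (Suc i)))) \<le> (\<Sum>i<m. K * (t (Suc i) - t i))"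
  proof (rule sum_mono)
    fix i assume "i \<in> {..<m}"
    then have "a \<le> t i" "t i \<le> t (Suc i)" "t (Suc i) \<le> b"
      using partition_subinterval[of m t a b i] p mt by auto
    then show "dist (g (t i)) (g (t (Suc i))) \<le> K * (t (Suc i) - t i)"
      using lipschitz_onD[OF assms, of "t i" "t (Suc i)"] by (simp add: dist_real_def)
  qed
  also have "\<dots> = K * (b - a)"
    using mt by (simp add: sum_distrib_left[symmetric] sum_lessThan_telescope)
  finally show "ereal (\<Sum>i<fst p. dist (g (snd p i)) (g (snd p (Suc i)))) \<le> ereal (K * (b - a))"
    using mt by simp
qed

lemma integral_sum_consecutive_intervals:
  fixes F :: "real \<Rightarrow> real"
  assumes "\<forall>i<m. t i \<le> t (Suc i)" "F integrable_on {t 0..t m}"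
  shows "(\<Sum>i<m. integral {t i..t (Suc i)} F) = integral {t 0..t m} F"
  using assms
proof (induction m)
  case (Suc m)
  have "t 0 \<le> t m"
    using lift_Suc_mono_le_upto[OF Suc.prems(1), of 0 m] by simp
  moreover have "t m \<le> t (Suc m)"
    using Suc.prems(1) by simp
  ultimately have "F integrable_on {t 0..t m}"
    using integrable_on_subinterval[OF Suc.prems(2)] by simp
  with Suc show ?case
    using Henstock_Kurzweil_Integration.integral_combine[OF \<open>t 0 \<le> t m\<close> _ Suc.prems(2)]
    by simp
qed simp

lemma inf_mult_curve_length_le_integral:
  assumes "K-lipschitz_on {s..t} g" "s \<le> t"
    and "continuous_on {s..t} (f \<circ> g)" "\<forall>x\<in>{s..t}. 0 \<le> f (g x)"
  shows "ereal (Inf ((f \<circ> g) ` {s..t})) * curve_length_on g s t \<le> ereal (K * integral {s..t} (f \<circ> g))"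
proof -
  define I where "I = Inf ((f \<circ> g) ` {s..t})"
  have "0 \<le> I"
    unfolding I_def using assms(2,4) by (intro cInf_greatest) auto
  have I_le: "I \<le> (f \<circ> g) x" if "x \<in> {s..t}" for x
    unfolding I_def using that assms(4) by (intro cInf_lower) (auto intro!: bdd_belowI[of _ 0])
  have "ereal I * curve_length_on g s t \<le> ereal I * ereal (K * (t - s))"
    using curve_length_on_le_lipschitz[OF assms(1)] \<open>0 \<le> I\<close> by (intro ereal_mult_left_mono) auto
  also have "\<dots> = ereal (K * (I * (t - s)))"
    by (simp add: mult.left_commute)
  also have "I * (t - s) = integral {s..t} (\<lambda>_. I)"
    using assms(2) by simp
  also have "\<dots> \<le> integral {s..t} (f \<circ> g)"
    using I_le integrable_continuous_real[OF assms(3)] by (intro integral_le) auto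
  finally show ?thesis
    unfolding I_def using lipschitz_on_nonneg[OF assms(1)] by (simp add: mult_left_mono)
qed

lemma arclength_integral_le_lipschitz:
  assumes "K-lipschitz_on {0..1} g" "continuous_on {0..1} (f \<circ> g)" "\<forall>x\<in>{0..1}. 0 \<le> f (g x)"
  shows "arclength_integral f g \<le> ereal (K * integral {0..1} (f \<circ> g))"
  unfolding arclength_integral_def
proof (rule SUP_least)
  fix p assume p: "p \<in> partitions_of 0 1"
  then obtain m t where mt: "p = (m, t)" "t 0 = 0" "t m = 1"
    by (auto simp: partitions_of_def)
  have piece: "{t i..t (Suc i)} \<subseteq> {0..1}" "t i \<le> t (Suc i)" if "i < m" for i
    using partition_subinterval[of m t 0 1 i] p mt that by auto
  have "(\<Sum>i<m. ereal (Inf ((f \<circ> g) ` {t i..t (Suc i)})) * curve_length_on g (t i) (t (Suc i)))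
      \<le> (\<Sum>i<m. ereal (K * integral {t i..t (Suc i)} (f \<circ> g)))"
  proof (intro sum_mono inf_mult_curve_length_le_integral)
    fix i assume i: "i \<in> {..<m}"
    then have sub: "{t i..t (Suc i)} \<subseteq> {0..1}"
      using piece by simp
    show "K-lipschitz_on {t i..t (Suc i)} g"
      using lipschitz_on_subset[OF assms(1) sub] .
    show "t i \<le> t (Suc i)"
      using piece i by simp
    show "continuous_on {t i..t (Suc i)} (f \<circ> g)"
      using continuous_on_subset[OF assms(2) sub] .
    show "\<forall>x\<in>{t i..t (Suc i)}. 0 \<le> f (g x)"
      using assms(3) sub by blast
  qed
  also have "\<dots> = ereal (K * (\<Sum>i<m. integral {t i..t (Suc i)} (f \<circ> g)))"
    by (simp add: sum_distrib_left)
  also have "(\<Sum>i<m. integral {t i..t (Suc i)} (f \<circ> g)) = integral {0..1} (f \<circ> g)"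
    using integral_sum_consecutive_intervals[of m t "f \<circ> g"] piece(2)
      integrable_continuous_real[OF assms(2)] mt by simp
  finally show "(\<Sum>i<fst p. ereal (Inf ((f \<circ> g) ` {snd p i..snd p (Suc i)}))
      * curve_length_on g (snd p i) (snd p (Suc i))) \<le> ereal (K * integral {0..1} (f \<circ> g))"
    using mt by simp
qed

section \<open>Polygonal paths\<close>

text \<open>The m-th summand ramps from 0 to 1 while t crosses [\<tau> m, \<tau> (Suc m)], so on that interval
  the path moves linearly from q m to q (Suc m).\<close>
definition polygonal_path :: "nat \<Rightarrow> (nat \<Rightarrow> real) \<Rightarrow> (nat \<Rightarrow> 'a::real_vector) \<Rightarrow> real \<Rightarrow> 'a" where
  "polygonal_path N \<tau> q t =
     q 0 + (\<Sum>m<N. max 0 (min 1 ((t - \<tau> m) / (\<tau> (Suc m) - \<tau> m))) *\<^sub>R (q (Suc m) - q m))"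

lemma polygonal_path_eq:
  assumes "\<forall>k<N. \<tau> k < \<tau> (Suc k)" "m < N" "t \<in> {\<tau> m..\<tau> (Suc m)}"
  shows "polygonal_path N \<tau> q t = q m + ((t - \<tau> m) / (\<tau> (Suc m) - \<tau> m)) *\<^sub>R (q (Suc m) - q m)"
proof -
  define r where "r k = max 0 (min 1 ((t - \<tau> k) / (\<tau> (Suc k) - \<tau> k)))" for k
  have "\<forall>k<N. \<tau> k \<le> \<tau> (Suc k)"
    using assms(1) by (auto intro: less_imp_le)
  note mono = lift_Suc_mono_le_upto[OF this]
  have before: "r k = 1" if "k < m" for k
  proof -
    have "\<tau> (Suc k) - \<tau> k \<le> t - \<tau> k"
      using mono[of "Suc k" m] that assms by auto
    then show ?thesis
      using assms(1,2) that by (simp add: r_def)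
  qed
  have after: "r k = 0" if "m < k" "k < N" for k
    using mono[of "Suc m" k] that assms by (auto simp: r_def divide_nonpos_pos)
  have current: "r m = (t - \<tau> m) / (\<tau> (Suc m) - \<tau> m)"
    using assms by (auto simp: r_def)
  have "(\<Sum>k<N. r k *\<^sub>R (q (Suc k) - q k))
      = (\<Sum>k<Suc m. r k *\<^sub>R (q (Suc k) - q k)) + (\<Sum>k\<in>{Suc m..<N}. r k *\<^sub>R (q (Suc k) - q k))"
    using sum.union_disjoint[of "{..<Suc m}" "{Suc m..<N}"] assms(2)
    by (simp add: ivl_disj_int_one ivl_disj_un_one)
  also have "\<dots> = (\<Sum>k<m. r k *\<^sub>R (q (Suc k) - q k)) + r m *\<^sub>R (q (Suc m) - q m)
        + (\<Sum>k\<in>{Suc m..<N}. r k *\<^sub>R (q (Suc k) - q k))"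
    by simp
  also have "(\<Sum>k<m. r k *\<^sub>R (q (Suc k) - q k)) = q m - q 0"
    using before by (simp add: sum_lessThan_telescope)
  also have "(\<Sum>k\<in>{Suc m..<N}. r k *\<^sub>R (q (Suc k) - q k)) = 0"
    using after by (intro sum.neutral) auto
  finally show ?thesis
    using current by (simp add: polygonal_path_def r_def[symmetric])
qed

lemma polygonal_path_in_segment:
  assumes "\<forall>k<N. \<tau> k < \<tau> (Suc k)" "m < N" "t \<in> {\<tau> m..\<tau> (Suc m)}"
  shows "polygonal_path N \<tau> q t \<in> closed_segment (q m) (q (Suc m))"
proof -
  define u where "u = (t - \<tau> m) / (\<tau> (Suc m) - \<tau> m)"
  have "0 \<le> u" "u \<le> 1"
    using assms by (auto simp: u_def divide_simps)
  moreover have "polygonal_path N \<tau> q t = (1 - u) *\<^sub>R q m + u *\<^sub>R q (Suc m)"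
    using polygonal_path_eq[OF assms] by (simp add: u_def[symmetric] algebra_simps)
  ultimately show ?thesis
    by (auto simp: in_segment)
qed

lemma lipschitz_on_polygonal_path_piece:
  fixes q :: "nat \<Rightarrow> 'a::real_normed_vector"
  assumes "\<forall>k<N. \<tau> k < \<tau> (Suc k)" "m < N"
  shows "(dist (q m) (q (Suc m)) / (\<tau> (Suc m) - \<tau> m))-lipschitz_on {\<tau> m..\<tau> (Suc m)}
    (polygonal_path N \<tau> q)"
proof (rule lipschitz_onI)
  define D where "D = \<tau> (Suc m) - \<tau> m"
  have "0 < D"
    using assms by (simp add: D_def)
  then show "0 \<le> dist (q m) (q (Suc m)) / (\<tau> (Suc m) - \<tau> m)"
    by (simp add: D_def)
  fix x y assume "x \<in> {\<tau> m..\<tau> (Suc m)}" "y \<in> {\<tau> m..\<tau> (Suc m)}"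
  then have "polygonal_path N \<tau> q x - polygonal_path N \<tau> q y
      = ((x - \<tau> m) / D - (y - \<tau> m) / D) *\<^sub>R (q (Suc m) - q m)"
    using polygonal_path_eq[OF assms, of x q] polygonal_path_eq[OF assms, of y q]
    by (simp add: D_def scaleR_diff_left)
  also have "(x - \<tau> m) / D - (y - \<tau> m) / D = (x - y) / D"
    by (simp add: diff_divide_distrib)
  finally have "polygonal_path N \<tau> q x - polygonal_path N \<tau> q y
      = ((x - y) / D) *\<^sub>R (q (Suc m) - q m)" .
  then show "dist (polygonal_path N \<tau> q x) (polygonal_path N \<tau> q y)
      \<le> dist (q m) (q (Suc m)) / (\<tau> (Suc m) - \<tau> m) * dist x y"
    using \<open>0 < D\<close> by (simp add: D_def dist_norm norm_minus_commute abs_divide mult.commute)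
qed

lemma consecutive_intervals_cover:
  fixes \<tau> :: "nat \<Rightarrow> real"
  assumes "0 < N" "\<forall>k<N. \<tau> k \<le> \<tau> (Suc k)"
  shows "{\<tau> 0..\<tau> N} \<subseteq> (\<Union>m<N. {\<tau> m..\<tau> (Suc m)})"
  using assms
proof (induction N)
  case (Suc n)
  show ?case
  proof (cases "n = 0")
    case False
    then have "{\<tau> 0..\<tau> n} \<subseteq> (\<Union>m<n. {\<tau> m..\<tau> (Suc m)})"
      using Suc by simp
    moreover have "{\<tau> 0..\<tau> (Suc n)} \<subseteq> {\<tau> 0..\<tau> n} \<union> {\<tau> n..\<tau> (Suc n)}"
      by auto
    ultimately show ?thesis
      by (auto simp: lessThan_Suc)
  qed (simp add: lessThan_Suc)
qed simp

lemma lipschitz_on_polygonal_path: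
  fixes q :: "nat \<Rightarrow> 'a::real_normed_vector"
  assumes "\<forall>k<N. \<tau> k < \<tau> (Suc k)" "0 < N" "0 \<le> K"
    and "\<forall>m<N. dist (q m) (q (Suc m)) \<le> K * (\<tau> (Suc m) - \<tau> m)"
  shows "K-lipschitz_on {\<tau> 0..\<tau> N} (polygonal_path N \<tau> q)"
proof (rule lipschitz_on_closed_Union[where I="{..<N}"])
  fix m assume "m \<in> {..<N}"
  then have "m < N" "dist (q m) (q (Suc m)) / (\<tau> (Suc m) - \<tau> m) \<le> K"
    using assms(1,4) by (auto simp: pos_divide_le_eq)
  then show "K-lipschitz_on {\<tau> m..\<tau> (Suc m)} (polygonal_path N \<tau> q)"
    using lipschitz_on_le[OF lipschitz_on_polygonal_path_piece[OF assms(1)]] by blast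
next
  show "{\<tau> 0..\<tau> N} \<subseteq> (\<Union>m\<in>{..<N}. {\<tau> m..\<tau> (Suc m)})"
    using assms(1,2) by (intro consecutive_intervals_cover) (auto intro: less_imp_le)
qed (use assms(3) in auto)

lemma polygonal_path_image:
  fixes q :: "nat \<Rightarrow> 'a::real_normed_vector"
  assumes "\<forall>k<N. \<tau> k < \<tau> (Suc k)" "0 < N"
  shows "polygonal_path N \<tau> q ` {\<tau> 0..\<tau> N} \<subseteq> (\<Union>m<N. closed_segment (q m) (q (Suc m)))"
proof
  fix x assume "x \<in> polygonal_path N \<tau> q ` {\<tau> 0..\<tau> N}"
  then obtain t where t: "t \<in> {\<tau> 0..\<tau> N}" "x = polygonal_path N \<tau> q t"
    by blast
  have "\<forall>k<N. \<tau> k \<le> \<tau> (Suc k)"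
    using assms(1) by (auto intro: less_imp_le)
  then obtain m where "m < N" "t \<in> {\<tau> m..\<tau> (Suc m)}"
    using consecutive_intervals_cover[OF assms(2)] t(1) by blast
  then show "x \<in> (\<Union>m<N. closed_segment (q m) (q (Suc m)))"
    using polygonal_path_in_segment[OF assms(1)] t(2) by blast
qed

lemma polygonal_path_endpoints:
  assumes "\<forall>k<N. \<tau> k < \<tau> (Suc k)" "0 < N"
  shows "polygonal_path N \<tau> q (\<tau> 0) = q 0" "polygonal_path N \<tau> q (\<tau> N) = q N"
proof -
  show "polygonal_path N \<tau> q (\<tau> 0) = q 0"
    using polygonal_path_eq[OF assms(1,2), of "\<tau> 0"] assms by (simp add: less_imp_le)
  obtain n where n: "N = Suc n"
    using assms(2) gr0_implies_Suc by blast
  with assms(1) have "\<tau> n < \<tau> (Suc n)"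
    by simp
  with n show "polygonal_path N \<tau> q (\<tau> N) = q N"
    using polygonal_path_eq[OF assms(1), of n "\<tau> N" q] by simp
qed

lemma integral_polygonal_path_le:
  fixes q :: "nat \<Rightarrow> 'a::real_normed_vector"
  assumes "\<forall>k<N. \<tau> k < \<tau> (Suc k)"
    and "continuous_on {\<tau> 0..\<tau> N} (f \<circ> polygonal_path N \<tau> q)"
    and "\<forall>m<N. \<forall>x\<in>closed_segment (q m) (q (Suc m)). f x \<le> M m"
  shows "integral {\<tau> 0..\<tau> N} (f \<circ> polygonal_path N \<tau> q)
    \<le> (\<Sum>m<N. M m * (\<tau> (Suc m) - \<tau> m))"
proof -
  have mono: "\<forall>k<N. \<tau> k \<le> \<tau> (Suc k)"
    using assms(1) by (auto intro: less_imp_le)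
  have piece: "{\<tau> m..\<tau> (Suc m)} \<subseteq> {\<tau> 0..\<tau> N}" if "m < N" for m
  proof -
    have "\<tau> 0 \<le> \<tau> m" "\<tau> (Suc m) \<le> \<tau> N"
      using that lift_Suc_mono_le_upto[OF mono, of 0 m] lift_Suc_mono_le_upto[OF mono, of "Suc m" N] by auto
    then show ?thesis
      by auto
  qed
  have "integral {\<tau> 0..\<tau> N} (f \<circ> polygonal_path N \<tau> q)
      = (\<Sum>m<N. integral {\<tau> m..\<tau> (Suc m)} (f \<circ> polygonal_path N \<tau> q))"
    using integral_sum_consecutive_intervals[OF mono integrable_continuous_real[OF assms(2)]]
    by (simp add: comp_def)
  also have "\<dots> \<le> (\<Sum>m<N. integral {\<tau> m..\<tau> (Suc m)} (\<lambda>_. M m))"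
  proof (intro sum_mono integral_le)
    fix m x assume "m \<in> {..<N}" "x \<in> {\<tau> m..\<tau> (Suc m)}"
    then show "(f \<circ> polygonal_path N \<tau> q) x \<le> M m"
      using assms(3) polygonal_path_in_segment[OF assms(1), of m x q] by simp
  next
    fix m assume "m \<in> {..<N}"
    then show "(f \<circ> polygonal_path N \<tau> q) integrable_on {\<tau> m..\<tau> (Suc m)}"
      using integrable_continuous_real[OF continuous_on_subset[OF assms(2) piece]] by simp
  qed (simp add: integrable_const_ivl)
  also have "\<dots> = (\<Sum>m<N. M m * (\<tau> (Suc m) - \<tau> m))"
    using mono by (simp add: mult.commute)
  finally show ?thesis .
qed

lemma arclength_integral_polygonal_path_le:
  fixes q :: "nat \<Rightarrow> 'a::euclidean_space"
  assumes strict: "\<forall>k<N. \<tau> k < \<tau> (Suc k)" and "0 < N" "\<tau> 0 = 0" "\<tau> N = 1"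
    and lip: "K-lipschitz_on {0..1} (polygonal_path N \<tau> q)"
    and "continuous_on (\<Union>m<N. closed_segment (q m) (q (Suc m))) f"
    and bound: "\<forall>m<N. \<forall>x\<in>closed_segment (q m) (q (Suc m)). 0 \<le> f x \<and> f x \<le> M m"
  shows "arclength_integral f (polygonal_path N \<tau> q)
    \<le> ereal (K * (\<Sum>m<N. M m * (\<tau> (Suc m) - \<tau> m)))"
proof -
  define g where "g = polygonal_path N \<tau> q"
  have image: "g ` {0..1} \<subseteq> (\<Union>m<N. closed_segment (q m) (q (Suc m)))"
    using polygonal_path_image[OF strict \<open>0 < N\<close>, of q] assms(3,4) by (simp add: g_def)
  have cont: "continuous_on {0..1} (f \<circ> g)"
    using lipschitz_on_continuous_on[OF lip[folded g_def]] continuous_on_subset[OF assms(6) image]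
    by (rule continuous_on_compose)
  have "arclength_integral f g \<le> ereal (K * integral {0..1} (f \<circ> g))"
    using arclength_integral_le_lipschitz[OF lip[folded g_def] cont] image bound by blast
  also have "integral {0..1} (f \<circ> g) \<le> (\<Sum>m<N. M m * (\<tau> (Suc m) - \<tau> m))"
    using integral_polygonal_path_le[OF strict, of f q M] cont assms(3,4) bound by (simp add: g_def)
  finally show ?thesis
    unfolding g_def using lipschitz_on_nonneg[OF lip] by (simp add: mult_left_mono)
qed

lemma polygonal_curve_arclength_integral_le:
  fixes q :: "nat \<Rightarrow> 'a::euclidean_space"
  assumes "0 < N" "\<forall>m<N. 0 < w m" "\<forall>m<N. dist (q m) (q (Suc m)) \<le> w m"
    and "continuous_on (\<Union>m<N. closed_segment (q m) (q (Suc m))) f"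
    and "\<forall>m<N. \<forall>x\<in>closed_segment (q m) (q (Suc m)). 0 \<le> f x \<and> f x \<le> M m"
  obtains g where "rectifiable_curve g" "path_image g \<subseteq> (\<Union>m<N. closed_segment (q m) (q (Suc m)))"
    "pathstart g = q 0" "pathfinish g = q N" "arclength_integral f g \<le> ereal (\<Sum>m<N. M m * w m)"
proof -
  define W where "W = (\<Sum>m<N. w m)"
  have "0 < W"
    unfolding W_def using assms(1,2) by (intro sum_pos) auto
  define \<tau> where "\<tau> m = (\<Sum>k<m. w k) / W" for m
  have step: "\<tau> (Suc m) - \<tau> m = w m / W" for m
    by (simp add: \<tau>_def add_divide_distrib)
  have strict: "\<forall>m<N. \<tau> m < \<tau> (Suc m)"
    using step assms(2) \<open>0 < W\<close> by (metis diff_gt_0_iff_gt divide_pos_pos)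
  have ends: "\<tau> 0 = 0" "\<tau> N = 1"
    using \<open>0 < W\<close> by (simp_all add: \<tau>_def W_def)
  define g where "g = polygonal_path N \<tau> q"
  have lip: "W-lipschitz_on {0..1} g"
    using lipschitz_on_polygonal_path[OF strict assms(1), of W q] assms(3) step ends \<open>0 < W\<close>
    by (simp add: g_def)
  have "arclength_integral f g \<le> ereal (W * (\<Sum>m<N. M m * (\<tau> (Suc m) - \<tau> m)))"
    using arclength_integral_polygonal_path_le[OF strict assms(1) ends lip[unfolded g_def] assms(4,5)]
    by (simp add: g_def)
  also have "W * (\<Sum>m<N. M m * (\<tau> (Suc m) - \<tau> m)) = (\<Sum>m<N. M m * w m)"
    using \<open>0 < W\<close> by (simp add: step sum_distrib_left)
  finally have "arclength_integral f g \<le> ereal (\<Sum>m<N. M m * w m)" .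
  moreover have "rectifiable_curve g"
    using curve_length_on_le_lipschitz[OF lip] lipschitz_on_continuous_on[OF lip]
    by (auto simp: rectifiable_curve_def path_def)
  moreover have "path_image g \<subseteq> (\<Union>m<N. closed_segment (q m) (q (Suc m)))"
    using polygonal_path_image[OF strict assms(1), of q] ends by (simp add: g_def path_image_def)
  moreover have "pathstart g = q 0" "pathfinish g = q N"
    using polygonal_path_endpoints[OF strict assms(1), of q] ends
    by (simp_all add: g_def pathstart_def pathfinish_def)
  ultimately show ?thesis
    using that by blast
qed

section \<open>Quasihyperbolic distance along polygons\<close>

lemma continuous_on_inverse_infdist_frontier:
  assumes "open \<Omega>"
  shows "continuous_on \<Omega> (\<lambda>x. 1 / infdist x (frontier \<Omega>))"
proof (cases "frontier \<Omega> = {}")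
  case False
  have "0 < infdist x (frontier \<Omega>)" if "x \<in> \<Omega>" for x
    using that assms False by (intro infdist_pos_not_in_closed) (auto simp: frontier_def interior_open)
  then show ?thesis
    by (intro continuous_intros) force+
qed (simp add: infdist_def)

lemma qh_dist_le_polygon:
  fixes q :: "nat \<Rightarrow> 'a::euclidean_space"
  assumes "open \<Omega>" "0 < N"
    and segments: "\<forall>m<N. closed_segment (q m) (q (Suc m)) \<subseteq> \<Omega>"
    and bound: "\<forall>m<N. \<forall>x\<in>closed_segment (q m) (q (Suc m)).
      1 / infdist x (frontier \<Omega>) \<le> M m"
  shows "qh_dist \<Omega> (q 0) (q N) \<le> ereal (\<Sum>m<N. M m * dist (q m) (q (Suc m)))"
proof (rule ereal_le_epsilon2)
  define f where "f x = 1 / infdist x (frontier \<Omega>)" for x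
  have "0 \<le> M m" if "m < N" for m
    using bound that order_trans[OF _ bound[rule_format, OF that ends_in_segment(1)]]
    by (simp add: f_def infdist_nonneg)
  then have "0 \<le> (\<Sum>m<N. M m)"
    by (intro sum_nonneg) simp
  fix e :: real assume "0 < e"
  define \<epsilon> where "\<epsilon> = e / ((\<Sum>m<N. M m) + 1)"
  have "0 < \<epsilon>" "\<epsilon> * (\<Sum>m<N. M m) \<le> e"
    using \<open>0 < e\<close> \<open>0 \<le> (\<Sum>m<N. M m)\<close> by (auto simp: \<epsilon>_def field_simps)
  have "(\<Union>m<N. closed_segment (q m) (q (Suc m))) \<subseteq> \<Omega>"
    using segments by blast
  then have "continuous_on (\<Union>m<N. closed_segment (q m) (q (Suc m))) f"
    unfolding f_def by (rule continuous_on_subset[OF continuous_on_inverse_infdist_frontier[OF assms(1)]])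
  then obtain g where g: "rectifiable_curve g"
    "path_image g \<subseteq> (\<Union>m<N. closed_segment (q m) (q (Suc m)))"
    "pathstart g = q 0" "pathfinish g = q N"
    "arclength_integral f g \<le> ereal (\<Sum>m<N. M m * (dist (q m) (q (Suc m)) + \<epsilon>))"
    using polygonal_curve_arclength_integral_le[OF assms(2), of "\<lambda>m. dist (q m) (q (Suc m)) + \<epsilon>" q f M]
      \<open>0 < \<epsilon>\<close> bound by (auto simp: f_def infdist_nonneg add_nonneg_pos)
  have "qh_dist \<Omega> (q 0) (q N) \<le> arclength_integral f g"
    unfolding qh_dist_def f_def using g segments by (intro INF_lower) auto
  also have "\<dots> \<le> ereal (\<Sum>m<N. M m * (dist (q m) (q (Suc m)) + \<epsilon>))"
    by (rule g(5))
  also have "(\<Sum>m<N. M m * (dist (q m) (q (Suc m)) + \<epsilon>))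
      = (\<Sum>m<N. M m * dist (q m) (q (Suc m))) + \<epsilon> * (\<Sum>m<N. M m)"
    by (simp add: distrib_left sum.distrib sum_distrib_left mult.commute)
  finally show "qh_dist \<Omega> (q 0) (q N) \<le> ereal (\<Sum>m<N. M m * dist (q m) (q (Suc m))) + ereal e"
    using \<open>\<epsilon> * (\<Sum>m<N. M m) \<le> e\<close> by (simp add: order_trans)
qed

section \<open>Chains of star-shaped sets\<close>

lemma overlapping_chain_points:
  assumes "\<forall>i<j. S i \<inter> S (Suc i) \<noteq> {}" "a \<in> S 0" "b \<in> S j"
  obtains x where "x 0 = a" "x (Suc j) = b" "\<forall>i\<le>j. x i \<in> S i \<and> x (Suc i) \<in> S i"
proof -
  have "\<forall>i. \<exists>y. i < j \<longrightarrow> y \<in> S i \<inter> S (Suc i)"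
    using assms(1) by blast
  then obtain y where y: "\<forall>i<j. y i \<in> S i \<inter> S (Suc i)"
    by metis
  define x where "x i = (if i = 0 then a else if i = Suc j then b else y (i - 1))" for i
  have "x i \<in> S i" if "i \<le> j" for i
    using that assms(2) y[rule_format, of "i - 1"] by (auto simp: x_def)
  moreover have "x (Suc i) \<in> S i" if "i \<le> j" for i
    using that assms(3) y by (auto simp: x_def)
  ultimately show ?thesis
    using that[of x] by (simp add: x_def)
qed

lemma starlike_chain_polygon:
  assumes "\<forall>i\<le>j. starlike (S i)" "\<forall>i<j. S i \<inter> S (Suc i) \<noteq> {}" "a \<in> S 0" "b \<in> S j"
  obtains q where "q 0 = a" "q (2 * Suc j) = b"
    "\<forall>m<2 * Suc j. closed_segment (q m) (q (Suc m)) \<subseteq> S (m div 2)"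
proof -
  obtain x where x: "x 0 = a" "x (Suc j) = b" "\<forall>i\<le>j. x i \<in> S i \<and> x (Suc i) \<in> S i"
    using overlapping_chain_points[OF assms(2-4)] by blast
  have "\<forall>i. \<exists>c. i \<le> j \<longrightarrow> (\<forall>y\<in>S i. closed_segment c y \<subseteq> S i)"
    using assms(1) by (auto simp: starlike_def)
  then obtain c where c: "\<forall>i\<le>j. \<forall>y\<in>S i. closed_segment (c i) y \<subseteq> S i"
    by metis
  define q where "q m = (if even m then x (m div 2) else c (m div 2))" for m
  have "closed_segment (q m) (q (Suc m)) \<subseteq> S (m div 2)" if "m < 2 * Suc j" for m
  proof -
    have "m div 2 \<le> j"
      using that by simp
    then have ends: "x (m div 2) \<in> S (m div 2)" "x (Suc (m div 2)) \<in> S (m div 2)"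
      and star: "\<And>y. y \<in> S (m div 2) \<Longrightarrow> closed_segment (c (m div 2)) y \<subseteq> S (m div 2)"
      using x(3) c by auto
    show ?thesis
    proof (cases "even m")
      case True
      then have "closed_segment (q m) (q (Suc m)) = closed_segment (c (m div 2)) (x (m div 2))"
        by (simp add: q_def closed_segment_commute)
      then show ?thesis
        using star ends(1) by simp
    next
      case False
      then have "q m = c (m div 2)" "q (Suc m) = x (Suc (m div 2))"
        by (simp_all add: q_def)
      then show ?thesis
        using star ends(2) by simp
    qed
  qed
  moreover have "q 0 = a" "q (2 * Suc j) = b"
    using x by (simp_all add: q_def)
  ultimately show ?thesis
    using that by blast
qed

lemma sum_lessThan_double_div2:
  fixes g :: "nat \<Rightarrow> 'a::comm_semiring_1"
  shows "(\<Sum>m<2 * Suc j. g (m div 2)) = 2 * (\<Sum>i\<le>j. g i)"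
proof -
  have "(\<Sum>m<2 * Suc j. g (m div 2)) = (\<Sum>m\<le>Suc (2 * j). g (m div 2))"
    by (simp add: lessThan_Suc_atMost[symmetric])
  also have "\<dots> = (\<Sum>i\<le>j. g i + g i)"
    using sum.in_pairs_0[of "\<lambda>m. g (m div 2)" j] by simp
  finally show ?thesis
    by (simp add: mult_2 sum_distrib_left sum.distrib)
qed

text \<open>When \<partial>\<Omega> = {} the following lemmas hold by junk values: infdist x {} = setdist S {} = 0
  and x / 0 = 0.\<close>

lemma diam_dist_ratio_finite_iff:
  "diam_dist_ratio \<Omega> S \<noteq> \<infinity> \<longleftrightarrow>
    frontier \<Omega> = {} \<or> bounded S \<and> 0 < setdist S (frontier \<Omega>)"
  by (simp add: diam_dist_ratio_def)

lemma diam_dist_ratio_eq: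
  assumes "diam_dist_ratio \<Omega> S \<noteq> \<infinity>"
  shows "diam_dist_ratio \<Omega> S = ereal (diameter S / setdist S (frontier \<Omega>))"
  using assms by (auto simp: diam_dist_ratio_def split: if_splits)

lemma sum_diam_dist_ratio_eq:
  assumes "\<forall>i\<le>j. diam_dist_ratio \<Omega> (S i) \<noteq> \<infinity>"
  shows "(\<Sum>i\<le>j. diam_dist_ratio \<Omega> (S i))
    = ereal (\<Sum>i\<le>j. diameter (S i) / setdist (S i) (frontier \<Omega>))"
proof -
  have "(\<Sum>i\<le>j. diam_dist_ratio \<Omega> (S i))
      = (\<Sum>i\<le>j. ereal (diameter (S i) / setdist (S i) (frontier \<Omega>)))"
    using diam_dist_ratio_eq assms by (intro sum.cong) force+
  then show ?thesis
    by simp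
qed

lemma inverse_infdist_frontier_le:
  assumes "diam_dist_ratio \<Omega> S \<noteq> \<infinity>" "x \<in> S"
  shows "1 / infdist x (frontier \<Omega>) \<le> 1 / setdist S (frontier \<Omega>)"
proof (cases "frontier \<Omega> = {}")
  case False
  then have "0 < setdist S (frontier \<Omega>)"
    using assms(1) by (simp add: diam_dist_ratio_finite_iff)
  moreover have "setdist S (frontier \<Omega>) \<le> infdist x (frontier \<Omega>)"
    unfolding infdist_eq_setdist using assms(2) by (intro setdist_subset_left) auto
  ultimately show ?thesis
    by (intro divide_left_mono) auto
qed (simp add: infdist_def)

lemma dist_div_setdist_le:
  assumes "diam_dist_ratio \<Omega> S \<noteq> \<infinity>" "x \<in> S" "y \<in> S"
  shows "dist x y / setdist S (frontier \<Omega>) \<le> diameter S / setdist S (frontier \<Omega>)"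
proof (cases "frontier \<Omega> = {}")
  case False
  then have "bounded S" "0 < setdist S (frontier \<Omega>)"
    using assms(1) by (simp_all add: diam_dist_ratio_finite_iff)
  then show ?thesis
    using diameter_bounded_bound[OF _ assms(2,3)] by (simp add: divide_right_mono)
qed simp

lemma closed_if_diam_dist_ratio_finite:
  assumes "open \<Omega>" "closedin (top_of_set \<Omega>) S" "diam_dist_ratio \<Omega> S \<noteq> \<infinity>"
  shows "closed S"
proof -
  obtain T where T: "closed T" "S = \<Omega> \<inter> T"
    using assms(2) by (auto simp: closedin_closed)
  have "closure S \<subseteq> \<Omega>"
  proof (cases "frontier \<Omega> = {}")
    case True
    then have "\<Omega> = {} \<or> \<Omega> = UNIV"
      by (simp add: frontier_eq_empty)
    then show ?thesis
      using T by auto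
  next
    case False
    then have "0 < setdist (closure S) (frontier \<Omega>)"
      using assms(3) by (simp add: diam_dist_ratio_finite_iff)
    show ?thesis
    proof
      fix x assume x: "x \<in> closure S"
      show "x \<in> \<Omega>"
      proof (rule ccontr)
        assume "x \<notin> \<Omega>"
        moreover have "x \<in> closure \<Omega>"
          using x T closure_mono by blast
        ultimately have "x \<in> frontier \<Omega>"
          using assms(1) by (simp add: frontier_def interior_open)
        then have "setdist (closure S) (frontier \<Omega>) \<le> 0"
          using setdist_le_dist[OF x] by fastforce
        then show False
          using \<open>0 < setdist (closure S) (frontier \<Omega>)\<close> by simp
      qed
    qed
  qed
  moreover have "closure S \<subseteq> T"
    using T closure_minimal by blast
  ultimately show ?thesis
    using T closure_subset_eq by blast
qed

lemma qh_dist_le_starlike_chain: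
  fixes S :: "nat \<Rightarrow> 'a::euclidean_space set"
  assumes "open \<Omega>"
    and sets: "\<forall>i\<le>j. S i \<subseteq> \<Omega> \<and> starlike (S i) \<and> diam_dist_ratio \<Omega> (S i) \<noteq> \<infinity>"
    and "\<forall>i<j. S i \<inter> S (Suc i) \<noteq> {}" "a \<in> S 0" "b \<in> S j"
  shows "qh_dist \<Omega> a b \<le> 2 * (\<Sum>i\<le>j. diam_dist_ratio \<Omega> (S i))"
proof -
  define \<delta> where "\<delta> i = setdist (S i) (frontier \<Omega>)" for i
  obtain q where q: "q 0 = a" "q (2 * Suc j) = b"
    and segments: "\<forall>m<2 * Suc j. closed_segment (q m) (q (Suc m)) \<subseteq> S (m div 2)"
    using starlike_chain_polygon[of j S a b] assms(3-5) sets by blast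
  have in_chain: "m div 2 \<le> j" if "m < 2 * Suc j" for m
    using that by simp
  have "qh_dist \<Omega> a b \<le> ereal (\<Sum>m<2 * Suc j. 1 / \<delta> (m div 2) * dist (q m) (q (Suc m)))"
  proof -
    have "\<forall>m<2 * Suc j. closed_segment (q m) (q (Suc m)) \<subseteq> \<Omega>"
      using segments sets in_chain by blast
    moreover have "\<forall>m<2 * Suc j. \<forall>x\<in>closed_segment (q m) (q (Suc m)).
        1 / infdist x (frontier \<Omega>) \<le> 1 / \<delta> (m div 2)"
      using segments sets in_chain inverse_infdist_frontier_le unfolding \<delta>_def by blast
    ultimately have "qh_dist \<Omega> (q 0) (q (2 * Suc j))
        \<le> ereal (\<Sum>m<2 * Suc j. 1 / \<delta> (m div 2) * dist (q m) (q (Suc m)))"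
      using qh_dist_le_polygon[OF assms(1), of "2 * Suc j" q "\<lambda>m. 1 / \<delta> (m div 2)"] by simp
    then show ?thesis
      unfolding q .
  qed
  also have "(\<Sum>m<2 * Suc j. 1 / \<delta> (m div 2) * dist (q m) (q (Suc m)))
      \<le> (\<Sum>m<2 * Suc j. diameter (S (m div 2)) / \<delta> (m div 2))"
  proof (rule sum_mono)
    fix m assume "m \<in> {..<2 * Suc j}"
    then have "q m \<in> S (m div 2)" "q (Suc m) \<in> S (m div 2)"
      using segments ends_in_segment by blast+
    moreover have "diam_dist_ratio \<Omega> (S (m div 2)) \<noteq> \<infinity>"
      using sets in_chain \<open>m \<in> {..<2 * Suc j}\<close> by simp
    ultimately show "1 / \<delta> (m div 2) * dist (q m) (q (Suc m)) \<le> diameter (S (m div 2)) / \<delta> (m div 2)"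
      using dist_div_setdist_le unfolding \<delta>_def by simp
  qed
  also have "\<dots> = 2 * (\<Sum>i\<le>j. diameter (S i) / \<delta> i)"
    by (rule sum_lessThan_double_div2)
  also have "ereal \<dots> = 2 * (\<Sum>i\<le>j. diam_dist_ratio \<Omega> (S i))"
    using sum_diam_dist_ratio_eq[of j \<Omega> S] sets by (simp add: \<delta>_def)
  finally show ?thesis
    by simp
qed

theorem mainTheorem3:
  fixes \<Omega> :: "'a::euclidean_space set" and \<S> :: "'a set set"
    and z0 z :: 'a and Sq :: "nat \<Rightarrow> 'a set" and j :: nat
  assumes "open \<Omega>" and "connected \<Omega>"
    and "valid_subdivision \<Omega> \<S>"
    and "z0 \<in> \<Union>\<S>" and "z \<in> \<Union>\<S>"
    and "\<forall>i\<le>j. Sq i \<in> \<S>"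
    and "z0 \<in> Sq 0" and "z \<in> Sq j"
    and "\<forall>i<j. frontier (Sq i) \<inter> frontier (Sq (Suc i)) \<noteq> {}"
  shows "qh_dist \<Omega> z z0 \<le> 2 * (\<Sum>i\<le>j. diam_dist_ratio \<Omega> (Sq i))"
proof (cases "\<exists>i\<le>j. diam_dist_ratio \<Omega> (Sq i) = \<infinity>")
  case True
  then have "(\<Sum>i\<le>j. diam_dist_ratio \<Omega> (Sq i)) = \<infinity>"
    by (auto simp: sum_Pinfty)
  then show ?thesis
    by simp
next
  case False
  have pieces: "\<forall>i\<le>j. Sq i \<subseteq> \<Omega> \<and> closedin (top_of_set \<Omega>) (Sq i) \<and> starlike (Sq i)"
    using assms(3,6) by (auto simp: valid_subdivision_def)
  then have "closed (Sq i)" if "i \<le> j" for i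
    using closed_if_diam_dist_ratio_finite[OF assms(1)] False that by blast
  then have overlap: "Sq i \<inter> Sq (Suc i) \<noteq> {}" if "i < j" for i
    using assms(9) that frontier_subset_closed by (metis Int_mono Suc_leI less_imp_le subset_empty)
  txt \<open>The curves in qh_dist \<Omega> z z0 start at z \<in> Sq j, so the chain is traversed backwards.\<close>
  have "Sq (j - i) \<inter> Sq (j - Suc i) \<noteq> {}" if "i < j" for i
    using overlap[of "j - Suc i"] that by (simp add: Suc_diff_Suc Int_commute)
  then have "qh_dist \<Omega> z z0 \<le> 2 * (\<Sum>i\<le>j. diam_dist_ratio \<Omega> (Sq (j - i)))"
    using pieces False assms(1,7,8) by (intro qh_dist_le_starlike_chain) auto
  also have "(\<Sum>i\<le>j. diam_dist_ratio \<Omega> (Sq (j - i))) = (\<Sum>i\<le>j. diam_dist_ratio \<Omega> (Sq i))"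
    using sum.atLeastAtMost_rev[of "\<lambda>i. diam_dist_ratio \<Omega> (Sq i)" 0 j] by (simp add: atLeast0AtMost)
  finally show ?thesis .
qed
end
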